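(* Let $G$ be the undirected graph with vertex set $\{v_1,\dots,v_8\}$ and edge set $\{v_1v_5,\ v_1v_6,\ v_2v_5,\ v_2v_6,\ v_2v_7,\ v_2v_8,\ v_4v_7,\ v_4v_8\}$, and let $V_1=\{v_1,v_2,v_7,v_8\}$, $V_2=\{v_2,v_4,v_5,v_6\}$, $V_3=\{v_1,v_2,v_3,v_4\}$, $V_4=\{v_5,v_6,v_7,v_8\}$. Let $\mu\ge 4$ be even and let $\nu=\frac{\mu}{2}-1$. Consider the population (multiset of $\mu$ vertex covers of $G$) consisting of one copy of $V_1$, one copy of $V_2$, $\nu$ copies of $V_3$ and $\nu$ copies of $V_4$. Then this population has sub-optimal diversity (total Hamming distance) among populations of $\mu$ vertex covers of $G$ of size at most $4$, and replacing any one individual of it with any different vertex cover of $G$ of size at most $4$ strictly reduces the diversity.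
   Context: A vertex cover of $G=(V,E)$ is a set $C\subseteq V$ such that every edge has at least one endpoint in $C$. Subsets of $V$ are identified with bit strings of length $|V|$ (bit $i$ indicates whether $v_i$ is included). For a population $P=(x_1,\dots,x_\mu)$ (a multiset) of bit strings, the diversity is the total Hamming distance $D(P)=\sum_{1\le a<b\le \mu} H(x_a,x_b)$, where $H$ is the Hamming distance. *)

theory Defs
  imports Main
begin

(* Vertices v_1..v_8 are represented by the natural numbers 1..8.
   A subset of V is identified with its bit string; Hamming distance of
   two bit strings = cardinality of the symmetric difference of the sets. *)

definition Vset :: "nat set" where
  "Vset = {1..8}"

definition Eset :: "(nat \<times> nat) set" where
  "Eset = {(1,5), (1,6), (2,5), (2,6), (2,7), (2,8), (4,7), (4,8)}"

definition is_vertex_cover :: "nat set \<Rightarrow> bool" where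
  "is_vertex_cover C \<longleftrightarrow> C \<subseteq> Vset \<and> (\<forall>(u,v) \<in> Eset. u \<in> C \<or> v \<in> C)"

definition hamming :: "nat set \<Rightarrow> nat set \<Rightarrow> nat" where
  "hamming A B = card ((A - B) \<union> (B - A))"

definition diversity :: "nat set list \<Rightarrow> nat" where
  "diversity P = (\<Sum>b<length P. \<Sum>a<b. hamming (P ! a) (P ! b))"

definition valid_pop :: "nat \<Rightarrow> nat set list \<Rightarrow> bool" where
  "valid_pop \<mu> P \<longleftrightarrow> length P = \<mu> \<and> (\<forall>x \<in> set P. is_vertex_cover x \<and> card x \<le> 4)"

definition V1 :: "nat set" where "V1 = {1,2,7,8}"
definition V2 :: "nat set" where "V2 = {2,4,5,6}"
definition V3 :: "nat set" where "V3 = {1,2,3,4}"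
definition V4 :: "nat set" where "V4 = {5,6,7,8}"

definition pop4 :: "nat \<Rightarrow> nat set list" where
  "pop4 \<mu> = (let \<nu> = \<mu> div 2 - 1 in [V1, V2] @ replicate \<nu> V3 @ replicate \<nu> V4)"

end

theory Submission
  imports Defs
begin

(* For a population P of subsets of a finite universe U, write c_j for the number of members
   containing j. Every pair of members contributes to D(P) one unit per element on which they
   disagree, so D(P) = sum over j of c_j (mu - c_j). For pop4 with mu = 2 nu + 2 all counts
   are nu + 1 except c_2 = nu + 2 and c_3 = nu; hence D = 2 mu^2 - 2, while nu + 1 copies of
   each of the complementary covers V3 and V4 reach 2 mu^2.
   Replacing a member A by C shifts c_j by d_j = [j in C] - [j in A], which changes D by
   sum over j of d_j (mu - 2 c_j) - H(C, A) = 2 d_3 - 2 d_2 - H(C, A). Running through the nine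
   vertex covers of G with at most four vertices shows that this is negative unless C = A. *)

definition mem_count :: "'a \<Rightarrow> 'a set list \<Rightarrow> nat" where
  "mem_count j P = length (filter (\<lambda>x. j \<in> x) P)"

lemma mem_count_le_length: "mem_count j P \<le> length P"
  by (simp add: mem_count_def)

lemma mem_count_append: "mem_count j (P @ Q) = mem_count j P + mem_count j Q"
  by (simp add: mem_count_def)

lemma mem_count_Nil [simp]: "mem_count j [] = 0"
  by (simp add: mem_count_def)

lemma mem_count_Cons [simp]: "mem_count j (A # P) = of_bool (j \<in> A) + mem_count j P"
  by (simp add: mem_count_def)

lemma mem_count_replicate: "mem_count j (replicate k A) = k * of_bool (j \<in> A)"
  by (simp add: mem_count_def)

lemma mem_count_list_update:
  assumes "i < length P"
  shows "mem_count j (P[i := C]) + of_bool (j \<in> P ! i) = mem_count j P + of_bool (j \<in> C)"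
  using assms
proof (induction P arbitrary: i)
  case (Cons x P)
  then show ?case by (cases i) (auto simp: mem_count_def)
qed simp

lemma hamming_eq_sum_of_bool:
  assumes "finite U" and "A \<subseteq> U" and "B \<subseteq> U"
  shows "hamming A B = (\<Sum>j\<in>U. of_bool ((j \<in> A) \<noteq> (j \<in> B)))"
proof -
  have "(A - B) \<union> (B - A) = U \<inter> {j. (j \<in> A) \<noteq> (j \<in> B)}"
    using assms by blast
  then show ?thesis
    using assms(1) by (simp add: hamming_def)
qed

lemma hamming_eq_0_iff:
  assumes "finite A" and "finite B"
  shows "hamming A B = 0 \<longleftrightarrow> A = B"
  using assms by (auto simp: hamming_def)

lemma sum_of_bool_nth_eq_length_filter:
  "(\<Sum>a<length xs. of_bool (p (xs ! a))) = length (filter p xs)"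
  by (simp add: length_filter_conv_card lessThan_def Collect_conj_eq)

lemma diversity_snoc:
  "diversity (P @ [y]) = diversity P + (\<Sum>a<length P. hamming (P ! a) y)"
  unfolding diversity_def by (simp add: nth_append)

lemma diversity_eq_sum_mem_count:
  assumes "finite U" and "\<forall>x \<in> set P. x \<subseteq> U"
  shows "diversity P = (\<Sum>j\<in>U. mem_count j P * (length P - mem_count j P))"
  using assms(2)
proof (induction P rule: rev_induct)
  case Nil
  then show ?case by (simp add: diversity_def mem_count_def)
next
  case (snoc y P)
  let ?c = "\<lambda>j. mem_count j P" and ?n = "length P"
  have "(\<Sum>a<?n. hamming (P ! a) y) = (\<Sum>a<?n. \<Sum>j\<in>U. of_bool ((j \<in> P ! a) \<noteq> (j \<in> y)))"
    using snoc.prems assms(1) by (intro sum.cong refl hamming_eq_sum_of_bool) auto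
  also have "\<dots> = (\<Sum>j\<in>U. length (filter (\<lambda>x. (j \<in> x) \<noteq> (j \<in> y)) P))"
    by (subst sum.swap) (intro sum.cong refl sum_of_bool_nth_eq_length_filter)
  also have "\<dots> = (\<Sum>j\<in>U. if j \<in> y then ?n - ?c j else ?c j)"
  proof (intro sum.cong refl)
    fix j
    show "length (filter (\<lambda>x. (j \<in> x) \<noteq> (j \<in> y)) P) = (if j \<in> y then ?n - ?c j else ?c j)"
      using sum_length_filter_compl[of "\<lambda>x. j \<in> x" P] by (simp add: mem_count_def) arith
  qed
  finally have new_distances: "(\<Sum>a<?n. hamming (P ! a) y) = \<dots>" .
  have count_step: "c * (n - c) + (if b then n - c else c) = (c + of_bool b) * (Suc n - (c + of_bool b))"
    if "c \<le> n" for c n :: nat and b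
    using that by (cases b) (auto simp: Suc_diff_le diff_mult_distrib2)
  have step: "?c j * (?n - ?c j) + (if j \<in> y then ?n - ?c j else ?c j)
      = mem_count j (P @ [y]) * (length (P @ [y]) - mem_count j (P @ [y]))" for j
    using count_step[OF mem_count_le_length[of j P], of "j \<in> y"]
    by (simp add: mem_count_append)
  show ?case
    using snoc by (simp add: diversity_snoc new_distances sum.distrib[symmetric] step)
qed

lemma int_diversity_eq_sum_mem_count:
  assumes "finite U" and "\<forall>x \<in> set P. x \<subseteq> U"
  shows "int (diversity P)
    = (\<Sum>j\<in>U. int (mem_count j P) * (int (length P) - int (mem_count j P)))"
  unfolding diversity_eq_sum_mem_count[OF assms] of_nat_sum of_nat_mult
  by (intro sum.cong refl) (simp add: of_nat_diff mem_count_le_length)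

lemma diversity_list_update:
  assumes "finite U" and "\<forall>x \<in> set P. x \<subseteq> U" and "C \<subseteq> U" and "i < length P"
  shows "int (diversity (P[i := C])) = int (diversity P)
    + (\<Sum>j\<in>U. (of_bool (j \<in> C) - of_bool (j \<in> P ! i)) * (int (length P) - 2 * int (mem_count j P)))
    - int (hamming C (P ! i))"
proof -
  let ?n = "int (length P)" and ?c = "\<lambda>j. int (mem_count j P)"
  let ?d = "\<lambda>j. of_bool (j \<in> C) - of_bool (j \<in> P ! i) :: int"
  have replaced_in_U: "P ! i \<subseteq> U"
    using assms(2,4) by simp
  have hamming_replaced: "int (hamming C (P ! i)) = (\<Sum>j\<in>U. ?d j * ?d j)"
    unfolding hamming_eq_sum_of_bool[OF assms(1,3) replaced_in_U] of_nat_sum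
    by (intro sum.cong refl) auto
  have updated_in_U: "\<forall>x \<in> set (P[i := C]). x \<subseteq> U"
    using assms(2,3) set_update_subset_insert[of P i C] by blast
  have updated_count: "int (mem_count j (P[i := C])) = ?c j + ?d j" for j
    using mem_count_list_update[OF assms(4), of j C]
    by (cases "j \<in> C"; cases "j \<in> P ! i") auto
  have "int (diversity (P[i := C])) = (\<Sum>j\<in>U. (?c j + ?d j) * (?n - (?c j + ?d j)))"
    by (simp add: int_diversity_eq_sum_mem_count[OF assms(1) updated_in_U] updated_count)
  also have "\<dots> = (\<Sum>j\<in>U. ?c j * (?n - ?c j) + ?d j * (?n - 2 * ?c j) - ?d j * ?d j)"
    by (intro sum.cong refl) (simp add: algebra_simps)
  finally show ?thesis
    by (simp add: sum.distrib sum_subtractf int_diversity_eq_sum_mem_count[OF assms(1,2)]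
        hamming_replaced)
qed

lemma diversity_replicate_append_replicate:
  assumes "finite A" and "finite B"
  shows "diversity (replicate k A @ replicate k B) = k\<^sup>2 * hamming A B"
proof -
  let ?Q = "replicate k A @ replicate k B"
  have "\<forall>x \<in> set ?Q. x \<subseteq> A \<union> B"
    by auto
  then have "diversity ?Q = (\<Sum>j\<in>A \<union> B. mem_count j ?Q * (length ?Q - mem_count j ?Q))"
    by (rule diversity_eq_sum_mem_count[OF finite_UnI[OF assms]])
  also have "\<dots> = (\<Sum>j\<in>A \<union> B. k\<^sup>2 * of_bool ((j \<in> A) \<noteq> (j \<in> B)))"
  proof (intro sum.cong refl)
    fix j
    show "mem_count j ?Q * (length ?Q - mem_count j ?Q) = k\<^sup>2 * of_bool ((j \<in> A) \<noteq> (j \<in> B))"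
      by (cases "j \<in> A"; cases "j \<in> B")
        (simp_all add: mem_count_append mem_count_replicate power2_eq_square)
  qed
  also have "\<dots> = k\<^sup>2 * hamming A B"
    unfolding sum_distrib_left[symmetric]
      hamming_eq_sum_of_bool[OF finite_UnI[OF assms] Un_upper1 Un_upper2] ..
  finally show ?thesis .
qed

lemma pop4_eq: "pop4 (2 * \<nu> + 2) = [V1, V2] @ replicate \<nu> V3 @ replicate \<nu> V4"
  by (simp add: pop4_def)

lemma pop4_subset: "set (pop4 \<mu>) \<subseteq> {V1, V2, V3, V4}"
  by (auto simp: pop4_def Let_def)

lemma Vset_eq: "Vset = {1, 2, 3, 4, 5, 6, 7, 8}"
  by (auto simp: Vset_def)

lemma finite_Vset: "finite Vset"
  by (simp add: Vset_def)

lemma pop4_members_subset_Vset: "\<forall>x \<in> set (pop4 \<mu>). x \<subseteq> Vset"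
  using pop4_subset by (fastforce simp: Vset_def V1_def V2_def V3_def V4_def)

lemma length_pop4: "length (pop4 (2 * \<nu> + 2)) = 2 * \<nu> + 2"
  unfolding pop4_eq by simp

lemma mem_count_pop4:
  "mem_count j (pop4 (2 * \<nu> + 2))
    = of_bool (j \<in> V1) + of_bool (j \<in> V2) + \<nu> * of_bool (j \<in> V3) + \<nu> * of_bool (j \<in> V4)"
  unfolding pop4_eq by (simp add: mem_count_append mem_count_replicate)

lemma diversity_pop4: "diversity (pop4 (2 * \<nu> + 2)) + 2 = 8 * (\<nu> + 1)\<^sup>2"
  unfolding diversity_eq_sum_mem_count[OF finite_Vset pop4_members_subset_Vset]
  unfolding mem_count_pop4 length_pop4
  by (simp add: Vset_eq V1_def V2_def V3_def V4_def power2_eq_square)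

lemma diversity_pop4_list_update:
  assumes "i < 2 * \<nu> + 2" and "C \<subseteq> Vset"
  shows "int (diversity ((pop4 (2 * \<nu> + 2))[i := C])) = int (diversity (pop4 (2 * \<nu> + 2)))
    + 2 * (of_bool (3 \<in> C) - of_bool (3 \<in> pop4 (2 * \<nu> + 2) ! i))
    - 2 * (of_bool (2 \<in> C) - of_bool (2 \<in> pop4 (2 * \<nu> + 2) ! i))
    - int (hamming C (pop4 (2 * \<nu> + 2) ! i))"
proof -
  have index: "i < length (pop4 (2 * \<nu> + 2))"
    using assms(1) by (simp only: length_pop4)
  \<comment> \<open>2 and 3 are the only vertices whose count differs from \<open>\<nu> + 1\<close>\<close>
  show ?thesis
    unfolding diversity_list_update[OF finite_Vset pop4_members_subset_Vset assms(2) index]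
    unfolding mem_count_pop4 length_pop4
    by (simp add: Vset_eq V1_def V2_def V3_def V4_def algebra_simps)
qed

definition small_covers :: "nat set set" where
  "small_covers = {{1,2,4}, {1,2,3,4}, {1,2,4,5}, {1,2,4,6}, {1,2,4,7}, {1,2,4,8},
                   {1,2,7,8}, {2,4,5,6}, {5,6,7,8}}"

lemma vertex_cover_card_le_4_in_small_covers:
  assumes "is_vertex_cover C" and "card C \<le> 4"
  shows "C \<in> small_covers"
proof -
  have "C \<in> Pow (set [1,2,3,4,5,6,7,8])"
    using assms(1) by (auto simp: is_vertex_cover_def Vset_eq)
  then obtain xs where "xs \<in> set (subseqs [1,2,3,4,5,6,7,8])" and "C = set xs"
    unfolding subseqs_powset[symmetric] by blast
  then show ?thesis
    using assms unfolding is_vertex_cover_def Eset_def small_covers_def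
    by (simp add: Let_def) (elim disjE; simp)
qed

lemma small_cover_swap_bound:
  assumes "C \<in> small_covers" and "A \<in> {V1, V2, V3, V4}" and "C \<noteq> A"
  shows "2 * (of_bool (3 \<in> C) - of_bool (3 \<in> A)) - 2 * (of_bool (2 \<in> C) - of_bool (2 \<in> A))
    < int (hamming C A)"
proof -
  \<comment> \<open>\<open>hamming C A = 0\<close> stands in for \<open>C = A\<close>, which simp does not decide on explicit sets\<close>
  have all_pairs: "\<forall>C \<in> small_covers. \<forall>A \<in> {V1, V2, V3, V4}. hamming C A = 0
    \<or> 2 * (of_bool (3 \<in> C) - of_bool (3 \<in> A)) - 2 * (of_bool (2 \<in> C) - of_bool (2 \<in> A))
        < int (hamming C A)"
    by (simp add: small_covers_def hamming_def V1_def V2_def V3_def V4_def insert_Diff_if)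
  have "finite C" and "finite A"
    using assms(1,2) by (auto simp: small_covers_def V1_def V2_def V3_def V4_def)
  then have "hamming C A \<noteq> 0"
    using assms(3) by (simp add: hamming_eq_0_iff)
  then show ?thesis
    using bspec[OF bspec[OF all_pairs assms(1)] assms(2)] by simp
qed

lemma pop4_not_optimal:
  "\<exists>Q. valid_pop (2 * \<nu> + 2) Q \<and> diversity (pop4 (2 * \<nu> + 2)) < diversity Q"
proof
  let ?Q = "replicate (\<nu> + 1) V3 @ replicate (\<nu> + 1) V4"
  have "valid_pop (2 * \<nu> + 2) ?Q"
    by (auto simp: valid_pop_def is_vertex_cover_def Vset_def Eset_def V3_def V4_def)
  moreover have "diversity ?Q = 8 * (\<nu> + 1)\<^sup>2"
    using diversity_replicate_append_replicate[of V3 V4 "\<nu> + 1"]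
    by (simp add: hamming_def V3_def V4_def)
  ultimately show "valid_pop (2 * \<nu> + 2) ?Q \<and> diversity (pop4 (2 * \<nu> + 2)) < diversity ?Q"
    using diversity_pop4[of \<nu>] by simp
qed

lemma pop4_list_update_less:
  assumes "i < 2 * \<nu> + 2" and "is_vertex_cover C" and "card C \<le> 4" and "C \<noteq> pop4 (2 * \<nu> + 2) ! i"
  shows "diversity ((pop4 (2 * \<nu> + 2))[i := C]) < diversity (pop4 (2 * \<nu> + 2))"
proof -
  have "pop4 (2 * \<nu> + 2) ! i \<in> {V1, V2, V3, V4}"
    using assms(1) pop4_subset nth_mem length_pop4 by (metis subsetD)
  with vertex_cover_card_le_4_in_small_covers[OF assms(2,3)] have gain:
    "2 * (of_bool (3 \<in> C) - of_bool (3 \<in> pop4 (2 * \<nu> + 2) ! i))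
      - 2 * (of_bool (2 \<in> C) - of_bool (2 \<in> pop4 (2 * \<nu> + 2) ! i))
      < int (hamming C (pop4 (2 * \<nu> + 2) ! i))"
    using assms(4) by (rule small_cover_swap_bound)
  have "C \<subseteq> Vset"
    using assms(2) by (simp add: is_vertex_cover_def)
  with gain have "int (diversity ((pop4 (2 * \<nu> + 2))[i := C])) < int (diversity (pop4 (2 * \<nu> + 2)))"
    using diversity_pop4_list_update[OF assms(1) \<open>C \<subseteq> Vset\<close>] by linarith
  then show ?thesis
    by simp
qed

theorem lemma4:
  fixes \<mu> :: nat
  assumes "even \<mu>" and "\<mu> \<ge> 4"
  shows "(\<exists>Q. valid_pop \<mu> Q \<and> diversity (pop4 \<mu>) < diversity Q)
       \<and> (\<forall>i < \<mu>. \<forall>C. is_vertex_cover C \<and> card C \<le> 4 \<and> C \<noteq> pop4 \<mu> ! i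
              \<longrightarrow> diversity ((pop4 \<mu>)[i := C]) < diversity (pop4 \<mu>))"
proof -
  have "\<mu> = 2 * (\<mu> div 2 - 1) + 2"
    using assms by auto
  then obtain \<nu> where "\<mu> = 2 * \<nu> + 2"
    by blast
  then show ?thesis
    using pop4_not_optimal pop4_list_update_less by blast
qed

end
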